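(* For all integers $x\ge0$ and $r\ge1$ there is a finite undirected graph $H$ with two specified vertices $s,t$ such that the smallest $s$-$t$ separator of $H$ has size $r$ and the union of all important $s$-$t$ separators of excess at most $x$ has size $2^{x+1}r-r$.
   Context: For disjoint $X,Y\subseteq V(H)$, a set $K\subseteq V(H)\setminus(X\cup Y)$ is an $X$-$Y$ separator if $H\setminus K$ has no path from $X$ to $Y$; an $s$-$t$ separator is a $\{s\}$-$\{t\}$ separator. $NR(H,A,B)$ is the set of vertices not reachable from $A$ in $H\setminus B$. For separators, $K_1\prec^*K_2$ means $NR(H,Y,K_1)\subset NR(H,Y,K_2)$ (proper inclusion). A minimal $X$-$Y$ separator $K$ is important if there is no $X$-$Y$ separator $K'$ with $K\prec^*K'$ and $|K|\ge|K'|$. The excess of an important separator $S$ is $|S|-r_0$, where $r_0$ is the size of a smallest important separator. *)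

theory Defs
  imports Main
begin

definition ugraph :: "'a set \<Rightarrow> ('a \<times> 'a) set \<Rightarrow> bool" where
  "ugraph V E \<longleftrightarrow> finite V \<and> E \<subseteq> V \<times> V \<and> sym E \<and> irrefl E"

definition reach_avoid :: "'a set \<Rightarrow> ('a \<times> 'a) set \<Rightarrow> 'a set \<Rightarrow> 'a \<Rightarrow> 'a \<Rightarrow> bool" where
  "reach_avoid V E B a b \<longleftrightarrow> a \<in> V - B \<and> (a, b) \<in> (E \<inter> ((V - B) \<times> (V - B)))\<^sup>*"

definition separator :: "'a set \<Rightarrow> ('a \<times> 'a) set \<Rightarrow> 'a set \<Rightarrow> 'a set \<Rightarrow> 'a set \<Rightarrow> bool" where
  "separator V E X Y K \<longleftrightarrow> K \<subseteq> V - (X \<union> Y) \<and>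
     \<not> (\<exists>x\<in>X. \<exists>y\<in>Y. reach_avoid V E K x y)"

definition NR :: "'a set \<Rightarrow> ('a \<times> 'a) set \<Rightarrow> 'a set \<Rightarrow> 'a set \<Rightarrow> 'a set" where
  "NR V E A B = {v \<in> V. \<not> (\<exists>a\<in>A. reach_avoid V E B a v)}"

definition minimal_separator :: "'a set \<Rightarrow> ('a \<times> 'a) set \<Rightarrow> 'a set \<Rightarrow> 'a set \<Rightarrow> 'a set \<Rightarrow> bool" where
  "minimal_separator V E X Y K \<longleftrightarrow> separator V E X Y K \<and>
     (\<forall>K'. K' \<subset> K \<longrightarrow> \<not> separator V E X Y K')"

definition important_separator :: "'a set \<Rightarrow> ('a \<times> 'a) set \<Rightarrow> 'a set \<Rightarrow> 'a set \<Rightarrow> 'a set \<Rightarrow> bool" where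
  "important_separator V E X Y K \<longleftrightarrow> minimal_separator V E X Y K \<and>
     \<not> (\<exists>K'. separator V E X Y K' \<and> NR V E Y K \<subset> NR V E Y K' \<and> card K \<ge> card K')"

definition min_important_size :: "'a set \<Rightarrow> ('a \<times> 'a) set \<Rightarrow> 'a set \<Rightarrow> 'a set \<Rightarrow> nat" where
  "min_important_size V E X Y = (LEAST n. \<exists>K. important_separator V E X Y K \<and> card K = n)"

definition excess :: "'a set \<Rightarrow> ('a \<times> 'a) set \<Rightarrow> 'a set \<Rightarrow> 'a set \<Rightarrow> 'a set \<Rightarrow> nat" where
  "excess V E X Y S = card S - min_important_size V E X Y"

end

theory Submission
  imports Defs "HOL-Library.Countable" "HOL-Library.Sublist"
begin

text \<open>Hang r complete binary trees of depth x + 1 below s and join all their leaves to t.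
  If C contains s and is closed under parents, the children of C outside C (its frontier) form
  an s-t separator, and every separator avoiding C meets the leftmost path below each frontier
  vertex; as distinct frontier vertices have disjoint subtrees, such a separator is at least as
  large as the frontier. Frontiers without leaves are therefore important, and the roots give
  the minimum size r. A node of depth d lies in the frontier of the path above it, an important
  separator of size r + d, while every minimal separator containing it avoids that path and so
  has size at least r + d. Hence the important separators of excess at most x cover exactly the
  r (2^(x+1) - 1) nodes of depth at most x.\<close>

section \<open>Relabelling vertices\<close>

lemma rtrancl_map_prod_image:
  "(a, b) \<in> R\<^sup>* \<Longrightarrow> (f a, f b) \<in> (map_prod f f ` R)\<^sup>*"
  by (induction rule: rtrancl_induct) (auto intro: rtrancl_into_rtrancl)

lemma rtrancl_map_prod_image_iff:
  assumes "inj f"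
  shows "(f a, f b) \<in> (map_prod f f ` R)\<^sup>* \<longleftrightarrow> (a, b) \<in> R\<^sup>*"
proof
  have "map_prod (inv f) (inv f) ` map_prod f f ` R = R"
    using assms by (force simp: image_comp)
  moreover assume "(f a, f b) \<in> (map_prod f f ` R)\<^sup>*"
  then have "(inv f (f a), inv f (f b)) \<in> (map_prod (inv f) (inv f) ` map_prod f f ` R)\<^sup>*"
    by (rule rtrancl_map_prod_image)
  ultimately show "(a, b) \<in> R\<^sup>*"
    using assms by simp
qed (rule rtrancl_map_prod_image)

lemma ex_subset_range_iff:
  assumes "\<And>B. P B \<Longrightarrow> B \<subseteq> range f"
  shows "(\<exists>B. P B \<and> Q B) \<longleftrightarrow> (\<exists>A. P (f ` A) \<and> Q (f ` A))"
  using assms by (metis image_vimage_eq inf.absorb1)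

lemma Collect_subset_range:
  assumes "\<And>B. P B \<Longrightarrow> B \<subseteq> range f"
  shows "{B. P B} = image f ` {A. P (f ` A)}"
  using assms by (auto simp: image_iff) (metis image_vimage_eq inf.absorb1)

lemma separator_subset: "separator V E X Y K \<Longrightarrow> K \<subseteq> V"
  unfolding separator_def by blast

context
  fixes f :: "'a \<Rightarrow> 'b" and V :: "'a set" and E :: "('a \<times> 'a) set"
  assumes inj: "inj f"
begin

lemma reach_avoid_image:
  "reach_avoid (f ` V) (map_prod f f ` E) (f ` B) (f a) (f b) = reach_avoid V E B a b"
proof -
  have "map_prod f f ` E \<inter> ((f ` V - f ` B) \<times> (f ` V - f ` B))
      = map_prod f f ` (E \<inter> ((V - B) \<times> (V - B)))"
    using inj by (auto simp: inj_eq image_iff)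
  then show ?thesis
    unfolding reach_avoid_def using inj by (simp add: rtrancl_map_prod_image_iff inj_image_mem_iff image_set_diff)
qed

lemma separator_image:
  "separator (f ` V) (map_prod f f ` E) (f ` X) (f ` Y) (f ` K) = separator V E X Y K"
  unfolding separator_def using inj
  by (auto simp: reach_avoid_image inj_image_subset_iff image_Un[symmetric] image_set_diff[symmetric])

lemma ugraph_image: "ugraph V E \<Longrightarrow> ugraph (f ` V) (map_prod f f ` E)"
  using inj unfolding ugraph_def sym_def irrefl_def by (auto simp: inj_eq)

lemma separator_image_range: "separator (f ` V) (map_prod f f ` E) X' Y' K' \<Longrightarrow> K' \<subseteq> range f"
  using separator_subset by blast

lemma psubset_image_iff: "f ` A \<subset> f ` B \<longleftrightarrow> A \<subset> B"
  using inj by (simp add: inj_image_subset_iff inj_image_eq_iff psubset_eq)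

lemma ex_separator_image_iff:
  "(\<exists>K'. separator (f ` V) (map_prod f f ` E) (f ` X) (f ` Y) K' \<and> Q K')
   \<longleftrightarrow> (\<exists>K. separator V E X Y K \<and> Q (f ` K))"
proof -
  have "(\<exists>K'. separator (f ` V) (map_prod f f ` E) (f ` X) (f ` Y) K' \<and> Q K')
     \<longleftrightarrow> (\<exists>K. separator (f ` V) (map_prod f f ` E) (f ` X) (f ` Y) (f ` K) \<and> Q (f ` K))"
    by (rule ex_subset_range_iff) (rule separator_image_range)
  then show ?thesis by (simp add: separator_image)
qed

lemma minimal_separator_image:
  "minimal_separator (f ` V) (map_prod f f ` E) (f ` X) (f ` Y) (f ` K) = minimal_separator V E X Y K"
  using ex_separator_image_iff[of X Y "\<lambda>K'. K' \<subset> f ` K"]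
  unfolding minimal_separator_def separator_image psubset_image_iff by blast

lemma NR_image: "NR (f ` V) (map_prod f f ` E) (f ` Y) (f ` K) = f ` NR V E Y K"
  unfolding NR_def using inj by (auto simp: reach_avoid_image)

lemma important_separator_image:
  "important_separator (f ` V) (map_prod f f ` E) (f ` X) (f ` Y) (f ` K) = important_separator V E X Y K"
  using ex_separator_image_iff[where Q = "\<lambda>K'. NR (f ` V) (map_prod f f ` E) (f ` Y) (f ` K)
      \<subset> NR (f ` V) (map_prod f f ` E) (f ` Y) K' \<and> card (f ` K) \<ge> card K'"] inj
  unfolding important_separator_def
  by (simp add: minimal_separator_image NR_image psubset_image_iff card_image inj_on_subset)

lemma important_separator_image_range:
  "important_separator (f ` V) (map_prod f f ` E) X' Y' K' \<Longrightarrow> K' \<subseteq> range f"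
  unfolding important_separator_def minimal_separator_def by (rule separator_image_range) blast

lemma excess_image:
  "excess (f ` V) (map_prod f f ` E) (f ` X) (f ` Y) (f ` K) = excess V E X Y K"
proof -
  have "min_important_size (f ` V) (map_prod f f ` E) (f ` X) (f ` Y) = min_important_size V E X Y"
    unfolding min_important_size_def
    using ex_subset_range_iff[OF important_separator_image_range, where Q = "\<lambda>K'. card K' = n" for n] inj
    by (simp add: important_separator_image card_image inj_on_subset)
  then show ?thesis
    unfolding excess_def using inj by (simp add: card_image inj_on_subset)
qed

lemma Union_important_separators_image:
  "\<Union>{K'. important_separator (f ` V) (map_prod f f ` E) (f ` X) (f ` Y) K'
       \<and> excess (f ` V) (map_prod f f ` E) (f ` X) (f ` Y) K' \<le> x}
   = f ` \<Union>{K. important_separator V E X Y K \<and> excess V E X Y K \<le> x}"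
  by (subst Collect_subset_range[where f = f])
     (auto dest: important_separator_image_range simp: important_separator_image excess_image)

end

section \<open>The tree network\<close>

text \<open>Node c cs lies in the c-th tree at depth length cs; cs lists the branch choices from the
  node up to the root, so the parent drops the head.\<close>
datatype vertex = Source | Sink | Node nat "bool list"

fun parent :: "vertex \<Rightarrow> vertex" where
  "parent (Node c []) = Source"
| "parent (Node c (b # cs)) = Node c cs"
| "parent Source = Source"
| "parent Sink = Sink"

fun ancestor :: "vertex \<Rightarrow> vertex \<Rightarrow> bool" where
  "ancestor (Node c cs) (Node c' cs') \<longleftrightarrow> c = c' \<and> suffix cs cs'"
| "ancestor _ _ \<longleftrightarrow> False"

lemma ancestor_Source: "\<not> ancestor a Source"
  by (cases a) auto

lemma ancestor_refl: "v \<notin> {Source, Sink} \<Longrightarrow> ancestor v v"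
  by (cases v) auto

lemma ancestor_linear: "ancestor a v \<Longrightarrow> ancestor b v \<Longrightarrow> ancestor a b \<or> ancestor b a"
  by (cases a; cases b; cases v) (auto dest: suffix_same_cases)

lemma ancestor_parent: "ancestor a v \<Longrightarrow> a \<noteq> v \<Longrightarrow> ancestor a (parent v)"
  by (cases a; cases v rule: parent.cases) (auto simp: suffix_Cons)

lemma ancestor_of_parent: "ancestor a (parent v) \<Longrightarrow> v \<noteq> Source \<Longrightarrow> ancestor a v"
  by (cases a; cases v rule: parent.cases) (auto simp: suffix_Cons)

lemma ancestor_mem_parent_closed:
  assumes closed: "\<forall>v\<in>C. parent v \<in> C" and "ancestor a v" "v \<in> C"
  shows "a \<in> C"
proof (cases a; cases v)
  fix c cs c' cs'
  assume a: "a = Node c cs" and v: "v = Node c' cs'"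
  have "Node c (ds @ cs) \<in> C \<Longrightarrow> Node c cs \<in> C" for ds
    by (induction ds) (use closed in force)+
  then show "a \<in> C"
    using assms(2,3) a v by (auto simp: suffix_def)
qed (use assms in auto)

fun path_above :: "nat \<Rightarrow> bool list \<Rightarrow> vertex set" where
  "path_above c [] = {Source}"
| "path_above c (b # bs) = insert (Node c bs) (path_above c bs)"

lemma Node_in_path_above: "Node c' cs \<in> path_above c bs \<Longrightarrow> c' = c \<and> length cs < length bs"
  by (induction bs) auto

lemma parent_in_path_above: "parent (Node c bs) \<in> path_above c bs"
  by (cases bs) auto

lemma path_above_ancestor: "v \<in> path_above c bs \<Longrightarrow> v = Source \<or> ancestor v (parent (Node c bs))"
proof (induction bs)
  case (Cons b bs)
  then show ?case
    using ancestor_of_parent[of v "Node c bs"] by auto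
qed simp

locale tree_network =
  fixes r D :: nat
  assumes depth_pos: "D \<ge> 1"
begin

definition vertices :: "vertex set" where
  "vertices = {Source, Sink} \<union> {Node c cs | c cs. c < r \<and> length cs \<le> D}"

inductive tree_edge :: "vertex \<Rightarrow> vertex \<Rightarrow> bool" where
  source_root: "c < r \<Longrightarrow> tree_edge Source (Node c [])"
| node_child: "c < r \<Longrightarrow> length cs < D \<Longrightarrow> tree_edge (Node c cs) (Node c (b # cs))"
| leaf_sink: "c < r \<Longrightarrow> length cs = D \<Longrightarrow> tree_edge (Node c cs) Sink"

definition edges :: "(vertex \<times> vertex) set" where
  "edges = {(a, b). tree_edge a b \<or> tree_edge b a}"

definition avoiding :: "vertex set \<Rightarrow> (vertex \<times> vertex) set" where
  "avoiding K = edges \<inter> ((vertices - K) \<times> (vertices - K))"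

lemma Node_in_vertices [simp]: "Node c cs \<in> vertices \<longleftrightarrow> c < r \<and> length cs \<le> D"
  and Source_in_vertices [simp]: "Source \<in> vertices"
  and Sink_in_vertices [simp]: "Sink \<in> vertices"
  by (auto simp: vertices_def)

lemma finite_vertices: "finite vertices"
proof -
  have "vertices = {Source, Sink} \<union> case_prod Node ` ({..<r} \<times> {cs. set cs \<subseteq> UNIV \<and> length cs \<le> D})"
    by (auto simp: vertices_def)
  then show ?thesis
    using finite_lists_length_le[of "UNIV :: bool set" D] by simp
qed

lemma ugraph_tree_network: "ugraph vertices edges"
proof -
  have "tree_edge a b \<Longrightarrow> a \<in> vertices \<and> b \<in> vertices \<and> a \<noteq> b" for a b
    by (induction rule: tree_edge.induct) auto
  then show ?thesis
    unfolding ugraph_def edges_def sym_def irrefl_def using finite_vertices by blast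
qed

lemma tree_edge_parent: "tree_edge u v \<Longrightarrow> v \<noteq> Sink \<Longrightarrow> u = parent v \<and> v \<noteq> Source"
  by (induction rule: tree_edge.induct) auto

lemma edge_parent_cases:
  "(u, v) \<in> edges \<Longrightarrow> u \<noteq> Sink \<Longrightarrow> v \<noteq> Sink \<Longrightarrow>
    (u = parent v \<and> v \<noteq> Source) \<or> (v = parent u \<and> u \<noteq> Source)"
  unfolding edges_def using tree_edge_parent by auto

lemma tree_edge_from_parent: "v \<in> vertices \<Longrightarrow> v \<noteq> Source \<Longrightarrow> v \<noteq> Sink \<Longrightarrow> tree_edge (parent v) v"
  by (cases v rule: parent.cases) (auto intro: tree_edge.intros)

lemma tree_edge_in_edges: "tree_edge a b \<Longrightarrow> (a, b) \<in> edges" "tree_edge a b \<Longrightarrow> (b, a) \<in> edges"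
  by (auto simp: edges_def)

lemma avoidingI: "(a, b) \<in> edges \<Longrightarrow> a \<in> vertices - K \<Longrightarrow> b \<in> vertices - K \<Longrightarrow> (a, b) \<in> avoiding K"
  by (simp add: avoiding_def)

lemma sym_avoiding: "sym ((avoiding K)\<^sup>*)"
  by (rule sym_rtrancl) (auto simp: sym_def avoiding_def edges_def)

lemma avoiding_rtrancl_target: "(a, b) \<in> (avoiding K)\<^sup>* \<Longrightarrow> a \<noteq> b \<Longrightarrow> b \<in> vertices - K"
  by (induction rule: rtrancl_induct) (auto simp: avoiding_def)

lemma reach_avoid_iff: "reach_avoid vertices edges K a b \<longleftrightarrow> a \<in> vertices - K \<and> (a, b) \<in> (avoiding K)\<^sup>*"
  unfolding reach_avoid_def avoiding_def by simp

lemma separator_iff: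
  "separator vertices edges {Source} {Sink} K \<longleftrightarrow>
    K \<subseteq> vertices - {Source, Sink} \<and> (Source, Sink) \<notin> (avoiding K)\<^sup>*"
  unfolding separator_def reach_avoid_iff by auto

definition left_path :: "nat \<Rightarrow> bool list \<Rightarrow> vertex set" where
  "left_path c cs = {Node c (replicate j False @ cs) | j. j + length cs \<le> D}"

lemma left_path_self: "length cs \<le> D \<Longrightarrow> Node c cs \<in> left_path c cs"
  unfolding left_path_def by (auto intro: exI[of _ 0])

lemma ancestor_left_path: "v \<in> left_path c cs \<Longrightarrow> ancestor (Node c cs) v"
  unfolding left_path_def by (auto simp: suffix_def)

lemma left_path_reaches_Sink:
  assumes "c < r" "length cs \<le> D" "Sink \<notin> K" "left_path c cs \<inter> K = {}"
  shows "(Node c cs, Sink) \<in> (avoiding K)\<^sup>*"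
  using assms
proof (induction "D - length cs" arbitrary: cs)
  case 0
  then have "length cs = D" by simp
  then have "(Node c cs, Sink) \<in> avoiding K"
    using 0 left_path_self[of cs c] by (intro avoidingI tree_edge_in_edges leaf_sink) auto
  then show ?case by simp
next
  case (Suc n)
  then have child: "length (False # cs) \<le> D" by simp
  have "left_path c (False # cs) \<subseteq> left_path c cs"
    unfolding left_path_def
    by (force simp: replicate_app_Cons_same intro: exI[of _ "Suc _"])
  then have "(Node c (False # cs), Sink) \<in> (avoiding K)\<^sup>*"
    using Suc by (intro Suc.hyps) auto
  moreover have "(Node c cs, Node c (False # cs)) \<in> avoiding K"
    using Suc child left_path_self[of cs c] left_path_self[OF child, of c] \<open>left_path c (False # cs) \<subseteq> _\<close>
    by (intro avoidingI tree_edge_in_edges node_child) auto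
  ultimately show ?case
    by (meson converse_rtrancl_into_rtrancl)
qed

lemma left_path_hit_if_unreachable:
  assumes "c < r" "length cs \<le> D" "Sink \<notin> K" "(Sink, Node c cs) \<notin> (avoiding K)\<^sup>*"
  shows "left_path c cs \<inter> K \<noteq> {}"
  using left_path_reaches_Sink[OF assms(1-3)] assms(4) sym_avoiding by (meson symD)

section \<open>Frontiers of parent-closed sets\<close>

definition rooted :: "vertex set \<Rightarrow> bool" where
  "rooted C \<longleftrightarrow> Source \<in> C \<and> Sink \<notin> C \<and> C \<subseteq> vertices \<and> (\<forall>v\<in>C. parent v \<in> C)"

definition frontier :: "vertex set \<Rightarrow> vertex set" where
  "frontier C = {v \<in> vertices. v \<noteq> Source \<and> v \<noteq> Sink \<and> v \<notin> C \<and> parent v \<in> C}"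

definition internal :: "vertex set \<Rightarrow> bool" where
  "internal C \<longleftrightarrow> (\<forall>c cs. Node c cs \<in> C \<longrightarrow> length cs < D)"

lemma frontier_subset: "frontier C \<subseteq> vertices - {Source, Sink}"
  unfolding frontier_def by auto

lemma finite_frontier: "finite (frontier C)"
  using finite_vertices frontier_subset finite_subset by blast

lemma frontier_Node: "k \<in> frontier C \<Longrightarrow> \<exists>c cs. k = Node c cs \<and> c < r \<and> length cs \<le> D"
  unfolding frontier_def by (cases k) auto

lemma reaches_rooted:
  assumes "rooted C" "C \<inter> K = {}" "v \<in> C"
  shows "(Source, v) \<in> (avoiding K)\<^sup>*"
proof -
  have "Node c cs \<in> C \<Longrightarrow> (Source, Node c cs) \<in> (avoiding K)\<^sup>*" for c cs
  proof (induction cs)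
    case Nil
    then have "(Source, Node c []) \<in> avoiding K"
      using assms by (intro avoidingI tree_edge_in_edges source_root) (auto simp: rooted_def)
    then show ?case by simp
  next
    case (Cons b cs)
    then have "Node c cs \<in> C"
      using assms(1) unfolding rooted_def by (metis parent.simps(2))
    moreover from this have "(Node c cs, Node c (b # cs)) \<in> avoiding K"
      using Cons.prems assms by (intro avoidingI tree_edge_in_edges node_child) (auto simp: rooted_def)
    ultimately show ?case
      using Cons.IH by (meson rtrancl_into_rtrancl)
  qed
  then show ?thesis
    using assms by (cases v) (auto simp: rooted_def)
qed

lemma frontier_common_descendant:
  assumes "rooted C" "k1 \<in> frontier C" "k2 \<in> frontier C" "ancestor k1 v" "ancestor k2 v"
  shows "k1 = k2"
proof (rule ccontr)
  assume ne: "k1 \<noteq> k2"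
  have closed: "\<forall>v\<in>C. parent v \<in> C"
    using assms(1) unfolding rooted_def by blast
  have "k \<notin> C" "parent k \<in> C" if "k \<in> frontier C" for k
    using that unfolding frontier_def by auto
  moreover have "ancestor k1 (parent k2) \<or> ancestor k2 (parent k1)"
    using ancestor_linear[OF assms(4,5)] ancestor_parent ne by metis
  ultimately show False
    using ancestor_mem_parent_closed[OF closed] assms(2,3) by blast
qed

lemma frontier_separator:
  assumes "rooted C" "internal C"
  shows "separator vertices edges {Source} {Sink} (frontier C)"
  unfolding separator_iff
proof
  show "frontier C \<subseteq> vertices - {Source, Sink}"
    by (rule frontier_subset)
  have "v \<in> C" if "(Source, v) \<in> (avoiding (frontier C))\<^sup>*" for v
    using that
  proof (induction rule: rtrancl_induct)
    case base
    then show ?case using assms unfolding rooted_def by auto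
  next
    case (step y z)
    then have e: "(y, z) \<in> edges" "z \<in> vertices" "z \<notin> frontier C"
      unfolding avoiding_def by auto
    have "y \<noteq> Sink"
      using step assms unfolding rooted_def by auto
    show ?case
    proof (cases "z = Sink")
      case True
      then have "tree_edge y Sink"
        using e \<open>y \<noteq> Sink\<close> unfolding edges_def by (auto elim: tree_edge.cases)
      then show ?thesis
        using step assms(2) unfolding internal_def by (auto elim: tree_edge.cases)
    next
      case False
      then show ?thesis
        using edge_parent_cases[OF e(1) \<open>y \<noteq> Sink\<close> False] e step assms
        unfolding frontier_def rooted_def by auto
    qed
  qed
  then show "(Source, Sink) \<notin> (avoiding (frontier C))\<^sup>*"
    using assms unfolding rooted_def by auto
qed

lemma separator_hits_left_path:
  assumes C: "rooted C" and K: "separator vertices edges {Source} {Sink} K" "C \<inter> K = {}"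
    and k: "Node c cs \<in> frontier C"
  shows "left_path c cs \<inter> K \<noteq> {}"
proof
  assume miss: "left_path c cs \<inter> K = {}"
  have "c < r" "length cs \<le> D" "Sink \<notin> K" "(Source, Sink) \<notin> (avoiding K)\<^sup>*"
    using K(1) k unfolding separator_iff frontier_def by auto
  moreover have "parent (Node c cs) \<in> C" "Node c cs \<notin> K"
    using k miss left_path_self[OF \<open>length cs \<le> D\<close>] unfolding frontier_def by auto
  moreover from this have "(parent (Node c cs), Node c cs) \<in> avoiding K"
    using k C K(2) by (intro avoidingI tree_edge_in_edges tree_edge_from_parent) (auto simp: frontier_def rooted_def)
  ultimately show False
    using reaches_rooted[OF C K(2)] left_path_reaches_Sink[OF _ _ _ miss]
    by (meson rtrancl_into_rtrancl rtrancl_trans)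
qed

lemma card_frontier_le:
  assumes "rooted C" "finite K" and hit: "\<And>c cs. Node c cs \<in> frontier C \<Longrightarrow> left_path c cs \<inter> K \<noteq> {}"
  shows "card (frontier C) \<le> card K"
proof -
  have "\<exists>v. v \<in> K \<and> ancestor k v" if "k \<in> frontier C" for k
    using that hit frontier_Node ancestor_left_path by blast
  then obtain g where g: "g k \<in> K \<and> ancestor k (g k)" if "k \<in> frontier C" for k
    by metis
  have "inj_on g (frontier C)"
    by (rule inj_onI) (metis g frontier_common_descendant[OF assms(1)])
  moreover have "g ` frontier C \<subseteq> K"
    using g by blast
  ultimately show ?thesis
    using assms(2) by (simp add: card_inj_on_le)
qed

lemma card_frontier_le_separator:
  assumes "rooted C" "separator vertices edges {Source} {Sink} K" "C \<inter> K = {}"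
  shows "card (frontier C) \<le> card K"
  using assms finite_vertices separator_hits_left_path
  by (intro card_frontier_le) (auto simp: separator_iff finite_subset)

lemma rooted_insert: "rooted C \<Longrightarrow> k \<in> frontier C \<Longrightarrow> rooted (insert k C)"
  unfolding rooted_def frontier_def by auto

lemma frontier_insert:
  assumes "rooted C" "Node c cs \<in> frontier C" "length cs < D"
  shows "frontier (insert (Node c cs) C)
    = (frontier C - {Node c cs}) \<union> {Node c (True # cs), Node c (False # cs)}"
proof (intro equalityI subsetI)
  fix v
  assume v: "v \<in> frontier (insert (Node c cs) C)"
  show "v \<in> (frontier C - {Node c cs}) \<union> {Node c (True # cs), Node c (False # cs)}"
  proof (cases "parent v = Node c cs")
    case True
    then obtain b where "v = Node c (b # cs)"
      using v unfolding frontier_def by (cases v rule: parent.cases) auto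
    then show ?thesis by (cases b) auto
  next
    case False
    then show ?thesis using v unfolding frontier_def by auto
  qed
next
  fix v
  assume v: "v \<in> (frontier C - {Node c cs}) \<union> {Node c (True # cs), Node c (False # cs)}"
  have "Node c cs \<notin> C" "c < r"
    using assms(2) unfolding frontier_def by auto
  then have "Node c (b # cs) \<notin> C" for b
    using assms(1) unfolding rooted_def by (metis parent.simps(2))
  then show "v \<in> frontier (insert (Node c cs) C)"
    using v assms \<open>c < r\<close> unfolding frontier_def by auto
qed

lemma card_frontier_insert:
  assumes "rooted C" "Node c cs \<in> frontier C" "length cs < D"
  shows "card (frontier (insert (Node c cs) C)) = Suc (card (frontier C))"
proof -
  have "Node c (b # cs) \<notin> frontier C" for b
    using assms(2) unfolding frontier_def by auto
  then have "card (frontier (insert (Node c cs) C)) = card (frontier C - {Node c cs}) + 2"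
    unfolding frontier_insert[OF assms] using finite_frontier by (subst card_Un_disjoint) auto
  moreover have "card (frontier C) > 0"
    using assms(2) finite_frontier card_gt_0_iff by blast
  ultimately show ?thesis
    using assms(2) finite_frontier by (simp add: card_Diff_singleton)
qed

lemma frontier_minimal:
  assumes "rooted C" "K \<subset> frontier C"
  shows "\<not> separator vertices edges {Source} {Sink} K"
proof
  assume sep: "separator vertices edges {Source} {Sink} K"
  obtain k where k: "k \<in> frontier C" "k \<notin> K"
    using assms(2) by blast
  then obtain c cs where kc: "k = Node c cs"
    using frontier_Node by blast
  have "C \<inter> K = {}"
    using assms(2) unfolding frontier_def by blast
  then obtain v where v: "v \<in> left_path c cs" "v \<in> K"
    using separator_hits_left_path[OF assms(1) sep] k kc by blast
  then have "v \<in> frontier C" "ancestor k v" "ancestor v v"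
    using assms(2) ancestor_left_path kc unfolding left_path_def by auto
  then show False
    using frontier_common_descendant[OF assms(1) k(1)] k(2) v(2) by blast
qed

lemma NR_Sink: "NR vertices edges {Sink} K = {v \<in> vertices. Sink \<in> K \<or> (Sink, v) \<notin> (avoiding K)\<^sup>*}"
  unfolding NR_def reach_avoid_iff by auto

lemma frontier_subset_NR: "frontier C \<subseteq> NR vertices edges {Sink} (frontier C)"
  using avoiding_rtrancl_target[of Sink _ "frontier C"] frontier_subset unfolding NR_Sink by blast

text \<open>If a separator K dominated the frontier, it would have to meet the left paths below
  every frontier vertex and also below both children of a frontier vertex outside K; these are
  the left paths below the frontier of a set one larger.\<close>
lemma frontier_not_dominated:
  assumes C: "rooted C" and no_leaf: "\<And>c cs. Node c cs \<in> frontier C \<Longrightarrow> length cs < D"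
    and K: "separator vertices edges {Source} {Sink} K"
    and NR_less: "NR vertices edges {Sink} (frontier C) \<subset> NR vertices edges {Sink} K"
  shows "card (frontier C) < card K"
proof -
  have "finite K" "Sink \<notin> K"
    using K finite_vertices unfolding separator_iff by (auto intro: finite_subset)
  have unreachable: "(Sink, k) \<notin> (avoiding K)\<^sup>*" if "k \<in> frontier C" for k
    using that frontier_subset_NR NR_less \<open>Sink \<notin> K\<close> unfolding NR_Sink by blast
  show ?thesis
  proof (cases "frontier C \<subseteq> K")
    case True
    then have "frontier C \<noteq> K"
      using NR_less by blast
    then show ?thesis
      using True \<open>finite K\<close> by (simp add: psubset_card_mono)
  next
    case False
    then obtain c cs where k: "Node c cs \<in> frontier C" "Node c cs \<notin> K"
      using frontier_Node by blast
    have "(Sink, Node c (b # cs)) \<notin> (avoiding K)\<^sup>*" for b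
    proof
      assume reach: "(Sink, Node c (b # cs)) \<in> (avoiding K)\<^sup>*"
      have "c < r" "length cs < D"
        using k no_leaf frontier_Node by auto
      then have "(Node c (b # cs), Node c cs) \<in> avoiding K"
        using k avoiding_rtrancl_target[OF reach]
        by (intro avoidingI tree_edge_in_edges node_child) auto
      then show False
        using reach unreachable[OF k(1)] by (meson rtrancl_into_rtrancl)
    qed
    then have "(Sink, v) \<notin> (avoiding K)\<^sup>*" if "v \<in> frontier (insert (Node c cs) C)" for v
      using that unreachable frontier_insert[OF C k(1) no_leaf[OF k(1)]] by auto
    then have "card (frontier (insert (Node c cs) C)) \<le> card K"
      using rooted_insert[OF C k(1)] \<open>finite K\<close> frontier_Node \<open>Sink \<notin> K\<close>
      by (intro card_frontier_le left_path_hit_if_unreachable) auto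
    then show ?thesis
      using card_frontier_insert[OF C k(1) no_leaf[OF k(1)]] by simp
  qed
qed

lemma frontier_important:
  assumes "rooted C" "internal C" "\<And>c cs. Node c cs \<in> frontier C \<Longrightarrow> length cs < D"
  shows "important_separator vertices edges {Source} {Sink} (frontier C)"
  using frontier_separator[OF assms(1,2)] frontier_minimal[OF assms(1)]
    frontier_not_dominated[OF assms(1,3)]
  unfolding important_separator_def minimal_separator_def by fastforce

lemma rooted_path_above: "c < r \<Longrightarrow> length bs \<le> D \<Longrightarrow> rooted (path_above c bs)"
proof (induction bs)
  case (Cons b bs)
  then show ?case
    using parent_in_path_above[of c bs] unfolding rooted_def by auto
qed (auto simp: rooted_def)

lemma internal_path_above: "length bs \<le> D \<Longrightarrow> internal (path_above c bs)"
  unfolding internal_def using Node_in_path_above by fastforce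

lemma Node_in_frontier_path_above: "c < r \<Longrightarrow> length bs \<le> D \<Longrightarrow> Node c bs \<in> frontier (path_above c bs)"
  unfolding frontier_def using parent_in_path_above[of c bs] Node_in_path_above[of c bs c bs] by auto

lemma frontier_path_above_depth: "Node c' cs \<in> frontier (path_above c bs) \<Longrightarrow> length cs \<le> length bs"
  unfolding frontier_def by (cases cs) (auto dest: Node_in_path_above)

lemma frontier_Source: "frontier {Source} = (\<lambda>c. Node c []) ` {..<r}"
proof -
  have "v \<in> frontier {Source} \<longleftrightarrow> v \<in> (\<lambda>c. Node c []) ` {..<r}" for v
    unfolding frontier_def by (cases v rule: parent.cases) auto
  then show ?thesis by blast
qed

lemma card_frontier_Source: "card (frontier {Source}) = r"
  unfolding frontier_Source by (simp add: card_image inj_on_def)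

lemma card_frontier_path_above:
  "c < r \<Longrightarrow> length bs \<le> D \<Longrightarrow> card (frontier (path_above c bs)) = r + length bs"
proof (induction bs)
  case Nil
  then show ?case using card_frontier_Source by simp
next
  case (Cons b bs)
  then show ?case
    using card_frontier_insert[OF rooted_path_above Node_in_frontier_path_above] by simp
qed

section \<open>Important separators of bounded excess\<close>

lemma reachable_not_below_separator:
  assumes K: "separator vertices edges {Source} {Sink} K" "k \<in> K"
    and reach: "(Source, v) \<in> (avoiding K)\<^sup>*"
  shows "\<not> ancestor k v"
  using reach
proof (induction rule: rtrancl_induct)
  case base
  then show ?case by (simp add: ancestor_Source)
next
  case (step y z)
  have not_Sink: "y \<noteq> Sink" "z \<noteq> Sink"
    using step K(1) unfolding separator_iff by (auto intro: rtrancl_into_rtrancl)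
  have "(y, z) \<in> edges" "z \<noteq> k"
    using step K(2) unfolding avoiding_def by auto
  then show ?case
    using edge_parent_cases[OF _ not_Sink] step.IH ancestor_parent ancestor_of_parent by metis
qed

lemma separator_Diff_unreached_parent:
  assumes K: "separator vertices edges {Source} {Sink} K" and w: "w \<in> K"
    and unreached: "(Source, parent w) \<notin> (avoiding K)\<^sup>*"
  shows "separator vertices edges {Source} {Sink} (K - {w})"
proof -
  have no_Sink: "(Source, Sink) \<notin> (avoiding K)\<^sup>*"
    using K unfolding separator_iff by blast
  have "(Source, v) \<in> (avoiding K)\<^sup>*" if "(Source, v) \<in> (avoiding (K - {w}))\<^sup>*" for v
    using that
  proof (induction rule: rtrancl_induct)
    case (step y z)
    have e: "(y, z) \<in> edges" "y \<in> vertices - (K - {w})" "z \<in> vertices - (K - {w})"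
      using step(2) unfolding avoiding_def by auto
    have "y \<noteq> Sink"
      using step.IH no_Sink by blast
    show ?case
    proof (cases "z = w")
      case True
      have "w \<notin> {Source, Sink}"
        using w K unfolding separator_iff by auto
      then consider "y = parent w" | "w = parent y" "y \<noteq> Source"
        using edge_parent_cases[OF e(1) \<open>y \<noteq> Sink\<close>] True by auto
      then show ?thesis
      proof cases
        case 1
        then show ?thesis using unreached step.IH by simp
      next
        case 2
        then have "ancestor w y"
          using ancestor_of_parent ancestor_refl \<open>w \<notin> {Source, Sink}\<close> by metis
        then show ?thesis
          using reachable_not_below_separator[OF K w step.IH] by simp
      qed
    next
      case False
      have "y \<notin> K"
        using step.IH avoiding_rtrancl_target[of Source y K] K unfolding separator_iff by auto
      then have "(y, z) \<in> avoiding K"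
        using e False by (auto simp: avoiding_def)
      then show ?thesis
        using step.IH by (meson rtrancl_into_rtrancl)
    qed
  qed simp
  then show ?thesis
    using K no_Sink unfolding separator_iff by blast
qed

lemma minimal_separator_parent_reachable:
  assumes M: "minimal_separator vertices edges {Source} {Sink} K" and w: "w \<in> K"
  shows "(Source, parent w) \<in> (avoiding K)\<^sup>*"
  using separator_Diff_unreached_parent[of K w] M w unfolding minimal_separator_def by blast

lemma minimal_separator_disjoint_path_above:
  assumes M: "minimal_separator vertices edges {Source} {Sink} K" and w: "Node c bs \<in> K"
  shows "path_above c bs \<inter> K = {}"
proof -
  have K: "separator vertices edges {Source} {Sink} K"
    using M unfolding minimal_separator_def by blast
  have "\<not> ancestor v (parent (Node c bs))" if "v \<in> K" for v
    using reachable_not_below_separator[OF K that minimal_separator_parent_reachable[OF M w]] .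
  then show ?thesis
    using path_above_ancestor[of _ c bs] K unfolding separator_iff by blast
qed

lemma separator_card_ge: "separator vertices edges {Source} {Sink} K \<Longrightarrow> r \<le> card K"
  using card_frontier_le_separator[of "{Source}" K] card_frontier_Source
  unfolding separator_iff rooted_def by auto

lemma important_frontier_Source: "important_separator vertices edges {Source} {Sink} (frontier {Source})"
  using depth_pos by (intro frontier_important) (auto simp: rooted_def internal_def frontier_Source)

lemma min_important_size_eq: "min_important_size vertices edges {Source} {Sink} = r"
  unfolding min_important_size_def
proof (rule Least_equality)
  show "\<exists>K. important_separator vertices edges {Source} {Sink} K \<and> card K = r"
    using important_frontier_Source card_frontier_Source by blast
qed (auto simp: important_separator_def minimal_separator_def dest: separator_card_ge)

lemma Union_important_separators_excess:
  assumes "D = Suc x"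
  shows "\<Union>{K. important_separator vertices edges {Source} {Sink} K \<and> excess vertices edges {Source} {Sink} K \<le> x}
     = case_prod Node ` ({..<r} \<times> {cs. length cs \<le> x})" (is "?U = ?M")
proof (intro equalityI subsetI)
  fix v
  assume "v \<in> ?U"
  then obtain K where K: "important_separator vertices edges {Source} {Sink} K" "card K - r \<le> x" "v \<in> K"
    unfolding excess_def min_important_size_eq by blast
  then have M: "minimal_separator vertices edges {Source} {Sink} K"
    and sep: "separator vertices edges {Source} {Sink} K"
    unfolding important_separator_def minimal_separator_def by blast+
  then obtain c bs where v: "v = Node c bs" "c < r" "length bs \<le> D"
    using K(3) unfolding separator_iff by (cases v) auto
  have "r + length bs \<le> card K"
    using card_frontier_le_separator[OF rooted_path_above[OF v(2,3)] sep]
      minimal_separator_disjoint_path_above[OF M] card_frontier_path_above[OF v(2,3)] K(3) v(1)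
    by simp
  then show "v \<in> ?M"
    using K(2) v by auto
next
  fix v
  assume "v \<in> ?M"
  then obtain c bs where v: "v = Node c bs" "c < r" "length bs \<le> x"
    by auto
  then have depth: "length bs \<le> D"
    using assms by simp
  have "important_separator vertices edges {Source} {Sink} (frontier (path_above c bs))"
    using rooted_path_above[OF v(2) depth] internal_path_above[OF depth]
      frontier_path_above_depth v(3) assms
    by (intro frontier_important) fastforce+
  moreover have "excess vertices edges {Source} {Sink} (frontier (path_above c bs)) \<le> x"
    unfolding excess_def min_important_size_eq card_frontier_path_above[OF v(2) depth] using v by simp
  ultimately show "v \<in> ?U"
    using Node_in_frontier_path_above[OF v(2) depth] v(1) by blast
qed

end

lemma card_Node_depth_le:
  "card (case_prod Node ` ({..<r} \<times> {cs :: bool list. length cs \<le> x})) = 2 ^ (x + 1) * r - r"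
proof -
  have "card {cs :: bool list. length cs \<le> x} = (\<Sum>i\<le>x. 2 ^ i)"
    using card_lists_length_le[of "UNIV :: bool set" x] by simp
  also have "\<dots> = 2 ^ (x + 1) - 1"
    by (induction x) auto
  finally show ?thesis
    by (simp add: card_image inj_on_def card_cartesian_product right_diff_distrib' mult.commute)
qed

instance vertex :: countable
  by countable_datatype

theorem theorem4:
  fixes x r :: nat
  assumes "r \<ge> 1"
  shows "\<exists>(V :: nat set) E s t. ugraph V E \<and> s \<in> V \<and> t \<in> V \<and> s \<noteq> t \<and>
     (\<exists>K. separator V E {s} {t} K \<and> card K = r) \<and>
     (\<forall>K. separator V E {s} {t} K \<longrightarrow> card K \<ge> r) \<and>
     card (\<Union>{S. important_separator V E {s} {t} S \<and> excess V E {s} {t} S \<le> x})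
       = 2 ^ (x + 1) * r - r"
proof -
  interpret tree_network r "Suc x"
    by unfold_locales simp
  define f where "f = (to_nat :: vertex \<Rightarrow> nat)"
  have "inj f"
    by (simp add: f_def)
  then have card_f: "card (f ` A) = card A" for A
    by (simp add: card_image inj_on_subset)
  have ex_separator: "(\<exists>K'. separator (f ` vertices) (map_prod f f ` edges) {f Source} {f Sink} K' \<and> Q K')
      \<longleftrightarrow> (\<exists>K. separator vertices edges {Source} {Sink} K \<and> Q (f ` K))" for Q
    using ex_separator_image_iff[OF \<open>inj f\<close>, of vertices edges "{Source}" "{Sink}" Q] by simp
  have "\<exists>K'. separator (f ` vertices) (map_prod f f ` edges) {f Source} {f Sink} K' \<and> card K' = r"
    unfolding ex_separator card_f using important_frontier_Source card_frontier_Source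
    unfolding important_separator_def minimal_separator_def by blast
  moreover have "\<not> (\<exists>K'. separator (f ` vertices) (map_prod f f ` edges) {f Source} {f Sink} K' \<and> card K' < r)"
    unfolding ex_separator card_f using separator_card_ge by (simp add: not_less)
  moreover have "card (\<Union>{K'. important_separator (f ` vertices) (map_prod f f ` edges) {f Source} {f Sink} K'
      \<and> excess (f ` vertices) (map_prod f f ` edges) {f Source} {f Sink} K' \<le> x}) = 2 ^ (x + 1) * r - r"
    using Union_important_separators_image[OF \<open>inj f\<close>, of vertices edges "{Source}" "{Sink}" x]
    by (simp add: card_f Union_important_separators_excess card_Node_depth_le)
  ultimately show ?thesis
    using ugraph_image[OF \<open>inj f\<close> ugraph_tree_network] \<open>inj f\<close>
    by (intro exI[of _ "f ` vertices"] exI[of _ "map_prod f f ` edges"] exI[of _ "f Source"] exI[of _ "f Sink"])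
       (auto simp: inj_eq not_less)
qed

end
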